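(* Let $P_0=(|P_0|,\preccurlyeq_0)$ be a finite poset with $|P_0|=\{x_1,\dots,x_{m_0}\}$ and let $S\subseteq|P_0|$ be a chain. Fix nonnegative integer values of $m_i$ for all $i$ with $x_i\notin S$. Then there are $2^{\mathrm{card}(S)}$ polynomials with rational coefficients in the variables $(m_i)_{x_i\in S}$, one for each assignment of parities to these variables, such that for every choice of nonnegative integers $(m_i)_{x_i\in S}$, $L_-(P_0;m_1,\dots,m_{m_0})$ equals the value of the polynomial corresponding to the parities of those $m_i$.
   Context: For nonnegative integers $m_1,\dots,m_{m_0}$ let $C_1,\dots,C_{m_0}$ be pairwise disjoint chains, $C_i$ being $x_{i,1}<\dots<x_{i,m_i}$. The lexicographic sum $P=P_0*(C_1,\dots,C_{m_0})$ is the poset on $\bigcup_i|C_i|$ with $x_{i,j}\preccurlyeq x_{i',j'}$ iff either $i\ne i'$ and $x_i\preccurlyeq_0x_{i'}$, or $i=i'$ and $j\le j'$. A linearization is a total order refining $\preccurlyeq$; relative to the reference ordering $x_{1,1},\dots,x_{1,m_1},x_{2,1},\dots,x_{m_0,m_{m_0}}$ of $|P|$, a linearization listing the elements as the reference ordering permuted by $\sigma$ is even or odd according to the parity of $\sigma$. $L_-(P_0;m_1,\dots,m_{m_0})$ is the number of even minus the number of odd linearizations of $P$. *)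

theory Defs
  imports Complex_Main "HOL-Combinatorics.Permutations"
begin

text \<open>The base poset P0 has ground set {0..<n} (index i stands for x_(i+1)), with order
  relation le.  Chain C_i has elements (i,j), j < m i.\<close>

definition lex_less :: "(nat \<Rightarrow> nat \<Rightarrow> bool) \<Rightarrow> nat \<times> nat \<Rightarrow> nat \<times> nat \<Rightarrow> bool" where
  "lex_less le x y \<longleftrightarrow>
     (fst x \<noteq> fst y \<and> le (fst x) (fst y)) \<or> (fst x = fst y \<and> snd x < snd y)"

definition ref_list :: "nat \<Rightarrow> (nat \<Rightarrow> nat) \<Rightarrow> (nat \<times> nat) list" where
  "ref_list n m = concat (map (\<lambda>i. map (\<lambda>j. (i, j)) [0..<m i]) [0..<n])"

definition linearizations ::
  "(nat \<Rightarrow> nat \<Rightarrow> bool) \<Rightarrow> nat \<Rightarrow> (nat \<Rightarrow> nat) \<Rightarrow> (nat \<times> nat) list set" where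
  "linearizations le n m = {ls. distinct ls \<and> set ls = set (ref_list n m) \<and>
     (\<forall>a b. a < b \<and> b < length ls \<longrightarrow> \<not> lex_less le (ls ! b) (ls ! a))}"

definition lin_perm :: "nat \<Rightarrow> (nat \<Rightarrow> nat) \<Rightarrow> (nat \<times> nat) list \<Rightarrow> nat \<Rightarrow> nat" where
  "lin_perm n m ls = (\<lambda>k. if k < length ls then (THE r. r < length (ref_list n m) \<and> ref_list n m ! r = ls ! k) else k)"

definition L_minus :: "(nat \<Rightarrow> nat \<Rightarrow> bool) \<Rightarrow> nat \<Rightarrow> (nat \<Rightarrow> nat) \<Rightarrow> int" where
  "L_minus le n m = (\<Sum>ls \<in> linearizations le n m. sign (lin_perm n m ls))"

definition poly_fun_on :: "nat set \<Rightarrow> ((nat \<Rightarrow> nat) \<Rightarrow> rat) \<Rightarrow> bool" where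
  "poly_fun_on S f \<longleftrightarrow> (\<exists>(d::nat) (c :: (nat \<Rightarrow> nat) \<Rightarrow> rat). \<forall>m.
     f m = (\<Sum>e \<in> {e. (\<forall>i. i \<notin> S \<longrightarrow> e i = 0) \<and> (\<forall>i\<in>S. e i \<le> d)}.
              c e * (\<Prod>i\<in>S. of_nat (m i) ^ e i)))"

end

theory Submission
  imports Defs
begin

text \<open>The last element of a linearization of \<open>P\<close> is the top of a chain \<open>C\<^sub>i\<close> whose index \<open>x\<^sub>i\<close>
  is maximal among those with nonempty chains. Removing it gives the recursion
  \<open>L\<^sub>-(m) = \<Sum>\<^sub>i (-1)\<^bsup>\<Sum>\<^sub>j\<^sub>>\<^sub>i m\<^sub>j\<^esup> L\<^sub>-(m - e\<^sub>i)\<close>, the sign counting the elements of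
  later chains the removed element passes in the reference ordering.

  Fix the values outside a subset \<open>T\<close> of the chain \<open>S\<close> and the parities inside it, and let \<open>s\<close> be
  the greatest element of \<open>T\<close>. If a nonempty chain outside \<open>T\<close> lies above \<open>x\<^sub>s\<close>, only chains
  outside \<open>T\<close> can come last, and the recursion lowers the total size of the chains outside \<open>T\<close>.
  Otherwise \<open>L\<^sub>-(m) = \<epsilon> L\<^sub>-(m - e\<^sub>s) + h(m)\<close>, where \<open>\<epsilon> = \<plusminus>1\<close> depends only on the fixed
  parities and \<open>h\<close> is polynomial by induction. Unrolling in \<open>m\<^sub>s\<close> sums \<open>h\<close> separately over
  the even and the odd values below \<open>m\<^sub>s\<close>; by Faulhaber's formula this is a polynomial once the
  parity of \<open>m\<^sub>s\<close> is fixed.\<close>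

section \<open>The last-element recursion\<close>

lemma ref_list_Suc: "ref_list (Suc n) m = ref_list n m @ map (\<lambda>j. (n, j)) [0..<m n]"
  unfolding ref_list_def by simp

lemma ref_list_cong: "(\<And>i. i < n \<Longrightarrow> m i = m' i) \<Longrightarrow> ref_list n m = ref_list n m'"
  by (induction n) (auto simp: ref_list_Suc ref_list_def[of 0])

lemma set_ref_list: "set (ref_list n m) = {(i, j). i < n \<and> j < m i}"
  by (induction n) (auto simp: ref_list_Suc ref_list_def[of 0] less_Suc_eq)

lemma distinct_ref_list: "distinct (ref_list n m)"
  by (induction n) (auto simp: ref_list_Suc ref_list_def[of 0] set_ref_list distinct_map inj_on_def)

lemma L_minus_cong: "(\<And>i. i < n \<Longrightarrow> m i = m' i) \<Longrightarrow> L_minus le n m = L_minus le n m'"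
  unfolding L_minus_def linearizations_def lin_perm_def using ref_list_cong[of n m m'] by presburger

lemma ref_list_remove_top:
  assumes "i < n" "0 < m i"
  shows "\<exists>A B. ref_list n m = A @ (i, m i - 1) # B \<and> ref_list n (m(i := m i - 1)) = A @ B
     \<and> length B = (\<Sum>j\<in>{i<..<n}. m j)"
  using assms(1)
proof (induction n)
  case 0 then show ?case by simp
next
  case (Suc n)
  show ?case
  proof (cases "i < n")
    case True
    then obtain A B where AB: "ref_list n m = A @ (i, m i - 1) # B"
      "ref_list n (m(i := m i - 1)) = A @ B" "length B = (\<Sum>j\<in>{i<..<n}. m j)"
      using Suc.IH by blast
    have "{i<..<Suc n} = insert n {i<..<n}" using True by auto
    moreover have "(m(i := m i - 1)) n = m n" using True by simp
    ultimately show ?thesis using AB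
      by - (rule exI[of _ A], rule exI[of _ "B @ map (\<lambda>j. (n, j)) [0..<m n]"],
        simp add: ref_list_Suc del: fun_upd_apply)
  next
    case False
    then have i: "i = n" using Suc.prems by simp
    have "ref_list n (m(i := m i - 1)) = ref_list n m" using i by (intro ref_list_cong) simp
    moreover have "[0..<m i] = [0..<m i - 1] @ [m i - 1]"
      using assms(2) by (metis Suc_diff_1 upt_Suc_append zero_le)
    ultimately show ?thesis using i
      by - (rule exI[of _ "ref_list n m @ map (\<lambda>j. (n, j)) [0..<m i - 1]"], rule exI[of _ "[]"],
        simp add: ref_list_Suc fun_upd_same del: fun_upd_apply)
  qed
qed

definition list_pos :: "'a list \<Rightarrow> 'a \<Rightarrow> nat" where
  "list_pos xs y = (THE r. r < length xs \<and> xs ! r = y)"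

lemma list_pos_nth: "distinct xs \<Longrightarrow> r < length xs \<Longrightarrow> list_pos xs (xs ! r) = r"
  unfolding list_pos_def by (rule the_equality) (auto simp: nth_eq_iff_index_eq)

lemma list_pos_in: "distinct xs \<Longrightarrow> y \<in> set xs \<Longrightarrow> list_pos xs y < length xs \<and> xs ! list_pos xs y = y"
  by (metis list_pos_nth in_set_conv_nth)

lemma list_pos_insert:
  assumes "distinct (A @ x # B)" "y \<in> set (A @ B)"
  shows "list_pos (A @ x # B) y =
    (if list_pos (A @ B) y < length A then list_pos (A @ B) y else Suc (list_pos (A @ B) y))"
proof -
  define r where "r = list_pos (A @ B) y"
  have r: "r < length (A @ B)" "(A @ B) ! r = y"
    using list_pos_in[of "A @ B" y] assms unfolding r_def by auto
  show ?thesis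
  proof (cases "r < length A")
    case True
    then have "(A @ x # B) ! r = y" using r by (simp add: nth_append)
    then show ?thesis using list_pos_nth[OF assms(1), of r] True r unfolding r_def[symmetric] by simp
  next
    case False
    then have "(A @ x # B) ! Suc r = y" using r by (simp add: nth_append Suc_diff_le)
    then show ?thesis using list_pos_nth[OF assms(1), of "Suc r"] False r unfolding r_def[symmetric] by simp
  qed
qed

lemma lin_perm_eq: "lin_perm n m ls k = (if k < length ls then list_pos (ref_list n m) (ls ! k) else k)"
  unfolding lin_perm_def list_pos_def by simp

definition move_down :: "nat \<Rightarrow> nat \<Rightarrow> nat \<Rightarrow> nat" where
  "move_down M r j = (if j < M then (if j < r then j else Suc j) else if j = M then r else j)"

lemma permutation_move_down:
  "r \<le> M \<Longrightarrow> permutation (move_down M r) \<and> sign (move_down M r) = (-1) ^ (M - r)"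
proof (induction "M - r" arbitrary: r)
  case 0
  then have "move_down M r = id" "M - r = 0" unfolding move_down_def by auto
  then show ?case by (simp add: permutation_id)
next
  case (Suc k)
  then have "r < M" by simp
  then have "move_down M r = transpose r (Suc r) \<circ> move_down M (Suc r)" "M - r = Suc (M - Suc r)"
    unfolding move_down_def by (auto simp: transpose_def)
  then show ?case using Suc
    by (simp add: permutation_compose permutation_swap_id sign_compose sign_swap_id)
qed

lemma length_linearization: "ls \<in> linearizations le n m \<Longrightarrow> length ls = length (ref_list n m)"
proof -
  assume "ls \<in> linearizations le n m"
  then have "distinct ls" "set ls = set (ref_list n m)" unfolding linearizations_def by auto
  then show ?thesis using distinct_card[of ls] distinct_card[of "ref_list n m"] distinct_ref_list by simp
qed

lemma finite_linearizations: "finite (linearizations le n m)"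
proof (rule finite_subset)
  show "linearizations le n m \<subseteq> {xs. set xs \<subseteq> set (ref_list n m) \<and> length xs \<le> length (ref_list n m)}"
  proof
    fix xs assume "xs \<in> linearizations le n m"
    then show "xs \<in> {xs. set xs \<subseteq> set (ref_list n m) \<and> length xs \<le> length (ref_list n m)}"
      using length_linearization[of xs] unfolding linearizations_def by auto
  qed
qed (rule finite_lists_length_le[OF finite_set])

lemma lin_perm_permutes:
  assumes ls: "ls \<in> linearizations le n m"
  shows "lin_perm n m ls permutes {..<length ls}"
proof -
  let ?R = "ref_list n m"
  have d: "distinct ls" "set ls = set ?R" "length ls = length ?R"
    using ls length_linearization[OF ls] unfolding linearizations_def by auto
  have pos: "list_pos ?R (ls ! k) < length ls \<and> ?R ! list_pos ?R (ls ! k) = ls ! k"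
    if "k < length ls" for k
    using list_pos_in[OF distinct_ref_list, of "ls ! k" n m] nth_mem[OF that] d by simp
  have inj: "inj_on (lin_perm n m ls) {..<length ls}"
    by (rule inj_onI) (metis pos d(1) lessThan_iff lin_perm_eq nth_eq_iff_index_eq)
  have "lin_perm n m ls ` {..<length ls} \<subseteq> {..<length ls}"
    using pos by (auto simp: lin_perm_eq)
  then have "bij_betw (lin_perm n m ls) {..<length ls} {..<length ls}"
    using endo_inj_surj[OF _ _ inj] inj by (simp add: bij_betw_def)
  then show ?thesis by (rule bij_imp_permutes) (simp add: lin_perm_eq)
qed

lemma sign_lin_perm_snoc:
  assumes R: "ref_list n m = A @ x # B" "ref_list n m' = A @ B"
    and ls: "ls \<in> linearizations le n m'"
  shows "sign (lin_perm n m (ls @ [x])) = (-1) ^ length B * sign (lin_perm n m' ls)"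
proof -
  have dd: "distinct (A @ x # B)" "distinct (A @ B)"
    using distinct_ref_list[of n m] distinct_ref_list[of n m'] unfolding R by auto
  have len: "length ls = length (A @ B)" using length_linearization[OF ls] unfolding R(2) .
  have st: "set ls = set (A @ B)" using ls unfolding linearizations_def R(2) by simp
  let ?M = "length ls"
  have "lin_perm n m (ls @ [x]) k = (move_down ?M (length A) \<circ> lin_perm n m' ls) k" for k
  proof -
    consider "k < ?M" | "k = ?M" | "k > ?M" by linarith
    then show ?thesis
    proof cases
      case 1
      then have mem: "ls ! k \<in> set (A @ B)" using st nth_mem by metis
      then show ?thesis using 1 list_pos_in[OF dd(2) mem] len list_pos_insert[OF dd(1) mem]
        unfolding lin_perm_eq R move_down_def by (simp add: nth_append)
    next
      case 2
      then show ?thesis using list_pos_nth[OF dd(1), of "length A"]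
        unfolding lin_perm_eq R move_down_def by simp
    qed (simp add: lin_perm_eq move_down_def)
  qed
  then have "lin_perm n m (ls @ [x]) = move_down ?M (length A) \<circ> lin_perm n m' ls" ..
  moreover have "?M - length A = length B" using len by simp
  ultimately show ?thesis
    using permutation_move_down[of "length A" ?M] len permutes_imp_permutation[OF _ lin_perm_permutes[OF ls]]
    by (simp add: sign_compose)
qed

definition maximal_chains :: "(nat \<Rightarrow> nat \<Rightarrow> bool) \<Rightarrow> nat \<Rightarrow> (nat \<Rightarrow> nat) \<Rightarrow> nat set" where
  "maximal_chains le n m = {i. i < n \<and> 0 < m i \<and> (\<forall>j<n. j \<noteq> i \<and> 0 < m j \<longrightarrow> \<not> le i j)}"

lemma snoc_linearization:
  assumes i: "i \<in> maximal_chains le n m" and ls: "ls \<in> linearizations le n (m(i := m i - 1))"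
  shows "ls @ [(i, m i - 1)] \<in> linearizations le n m"
proof -
  have i': "i < n" "0 < m i" "\<forall>j<n. j \<noteq> i \<and> 0 < m j \<longrightarrow> \<not> le i j"
    using i unfolding maximal_chains_def by auto
  obtain A B where AB: "ref_list n m = A @ (i, m i - 1) # B" "ref_list n (m(i := m i - 1)) = A @ B"
    using ref_list_remove_top[of i n m, OF i'(1,2)] by blast
  have dd: "distinct (A @ (i, m i - 1) # B)" using distinct_ref_list[of n m] unfolding AB(1) .
  have l: "distinct ls" "set ls = set (A @ B)"
    "\<forall>a b. a < b \<and> b < length ls \<longrightarrow> \<not> lex_less le (ls ! b) (ls ! a)"
    using ls AB unfolding linearizations_def by auto
  have top: "\<not> lex_less le (i, m i - 1) y" if "y \<in> set ls" for y
  proof -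
    have "y \<in> set (ref_list n (m(i := m i - 1)))" using that l(2) AB(2) by simp
    then obtain j k where jk: "y = (j, k)" "j < n" "k < (m(i := m i - 1)) j"
      unfolding set_ref_list by blast
    then show ?thesis using i'(3) unfolding lex_less_def by (cases "j = i") auto
  qed
  have "\<not> lex_less le ((ls @ [(i, m i - 1)]) ! b) ((ls @ [(i, m i - 1)]) ! a)"
    if "a < b" "b < Suc (length ls)" for a b
  proof (cases "b < length ls")
    case True
    then show ?thesis using l(3) that by (simp add: nth_append)
  next
    case False
    then show ?thesis using that top[OF nth_mem[of a ls]] by (simp add: nth_append)
  qed
  moreover have "distinct (ls @ [(i, m i - 1)])" "set (ls @ [(i, m i - 1)]) = set (ref_list n m)"
    using l(1,2) dd unfolding AB(1) by auto
  ultimately show ?thesis unfolding linearizations_def by auto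
qed

lemma butlast_linearization:
  assumes i: "i < n" "0 < m i" and ls: "ls @ [(i, m i - 1)] \<in> linearizations le n m"
  shows "ls \<in> linearizations le n (m(i := m i - 1))"
proof -
  obtain A B where AB: "ref_list n m = A @ (i, m i - 1) # B" "ref_list n (m(i := m i - 1)) = A @ B"
    using ref_list_remove_top[of i n m, OF i] by blast
  have dd: "distinct (A @ (i, m i - 1) # B)" using distinct_ref_list[of n m] unfolding AB(1) .
  have l: "distinct (ls @ [(i, m i - 1)])" "set (ls @ [(i, m i - 1)]) = set (A @ (i, m i - 1) # B)"
    "\<forall>a b. a < b \<and> b < Suc (length ls) \<longrightarrow>
       \<not> lex_less le ((ls @ [(i, m i - 1)]) ! b) ((ls @ [(i, m i - 1)]) ! a)"
    using ls AB unfolding linearizations_def by auto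
  have "set ls = set (ls @ [(i, m i - 1)]) - {(i, m i - 1)}" using l(1) by auto
  also have "\<dots> = set (A @ B)" using l(2) dd by auto
  finally have "set ls = set (A @ B)" .
  moreover have "\<not> lex_less le (ls ! b) (ls ! a)" if "a < b" "b < length ls" for a b
    using l(3)[rule_format, of a b] that by (simp add: nth_append)
  ultimately show ?thesis using l(1) unfolding linearizations_def AB(2) by auto
qed

lemma linearization_last:
  assumes ls: "ls \<in> linearizations le n m" "ls \<noteq> []"
  shows "\<exists>i\<in>maximal_chains le n m. \<exists>ls'. ls = ls' @ [(i, m i - 1)]"
proof -
  obtain ls' i k where y: "ls = ls' @ [(i, k)]" using ls(2) by (metis rev_exhaust surj_pair)
  have l: "distinct ls" "set ls = set (ref_list n m)"
    "\<forall>a b. a < b \<and> b < length ls \<longrightarrow> \<not> lex_less le (ls ! b) (ls ! a)"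
    using ls unfolding linearizations_def by auto
  have ik: "i < n" "k < m i" using l(2) unfolding y set_ref_list by auto
  have below: "\<not> lex_less le (i, k) z" if "z \<in> set (ref_list n m)" "z \<noteq> (i, k)" for z
  proof -
    have "z \<in> set ls'" using that l(2) unfolding y by auto
    then obtain a where "a < length ls'" "ls' ! a = z" by (auto simp: in_set_conv_nth)
    then show ?thesis using l(3)[rule_format, of a "length ls'"] unfolding y by (simp add: nth_append)
  qed
  have "k = m i - 1"
    using below[of "(i, m i - 1)"] ik unfolding set_ref_list lex_less_def by fastforce
  moreover have "\<not> le i j" if "j < n" "j \<noteq> i" "0 < m j" for j
    using below[of "(j, 0)"] that unfolding set_ref_list lex_less_def by auto
  ultimately show ?thesis using ik y unfolding maximal_chains_def by auto
qed

lemma linearizations_by_last: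
  assumes "\<exists>i<n. 0 < m i"
  shows "linearizations le n m =
    (\<Union>i\<in>maximal_chains le n m. (\<lambda>ls. ls @ [(i, m i - 1)]) ` linearizations le n (m(i := m i - 1)))"
proof (intro equalityI subsetI)
  fix ls assume ls: "ls \<in> linearizations le n m"
  have "ls \<noteq> []"
    using ls assms unfolding linearizations_def set_ref_list by auto
  then obtain i ls' where "i \<in> maximal_chains le n m" "ls = ls' @ [(i, m i - 1)]"
    using linearization_last[OF ls] by blast
  moreover from this have "ls' \<in> linearizations le n (m(i := m i - 1))"
    using butlast_linearization ls unfolding maximal_chains_def by blast
  ultimately show "ls \<in> (\<Union>i\<in>maximal_chains le n m.
      (\<lambda>ls. ls @ [(i, m i - 1)]) ` linearizations le n (m(i := m i - 1)))" by blast
qed (use snoc_linearization in blast)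

theorem L_minus_recursion:
  assumes "\<exists>i<n. 0 < m i"
  shows "L_minus le n m = (\<Sum>i\<in>maximal_chains le n m.
           (-1) ^ (\<Sum>j\<in>{i<..<n}. m j) * L_minus le n (m(i := m i - 1)))"
proof -
  let ?snoc = "\<lambda>i ls. ls @ [(i, m i - 1)]" and ?L = "\<lambda>i. linearizations le n (m(i := m i - 1))"
  have part: "(\<Sum>ls\<in>?snoc i ` ?L i. sign (lin_perm n m ls)) =
      (-1) ^ (\<Sum>j\<in>{i<..<n}. m j) * L_minus le n (m(i := m i - 1))"
    if "i \<in> maximal_chains le n m" for i
  proof -
    have "i < n" "0 < m i" using that unfolding maximal_chains_def by auto
    then obtain A B where AB: "ref_list n m = A @ (i, m i - 1) # B"
      "ref_list n (m(i := m i - 1)) = A @ B" "length B = (\<Sum>j\<in>{i<..<n}. m j)"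
      using ref_list_remove_top[of i n m] by blast
    have "(\<Sum>ls\<in>?snoc i ` ?L i. sign (lin_perm n m ls)) = (\<Sum>ls\<in>?L i. sign (lin_perm n m (?snoc i ls)))"
      by (rule sum.reindex[unfolded comp_def]) (simp add: inj_on_def)
    also have "\<dots> = (\<Sum>ls\<in>?L i. (-1) ^ length B * sign (lin_perm n (m(i := m i - 1)) ls))"
      by (intro sum.cong refl sign_lin_perm_snoc[OF AB(1,2)])
    finally show ?thesis unfolding L_minus_def AB(3) by (simp add: sum_distrib_left)
  qed
  have "L_minus le n m = (\<Sum>i\<in>maximal_chains le n m. \<Sum>ls\<in>?snoc i ` ?L i. sign (lin_perm n m ls))"
    unfolding L_minus_def linearizations_by_last[OF assms]
  proof (rule sum.UNION_disjoint)
    show "finite (maximal_chains le n m)" unfolding maximal_chains_def by simp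
    show "\<forall>i\<in>maximal_chains le n m. finite (?snoc i ` ?L i)" by (simp add: finite_linearizations)
    show "\<forall>i\<in>maximal_chains le n m. \<forall>j\<in>maximal_chains le n m. i \<noteq> j \<longrightarrow>
        ?snoc i ` ?L i \<inter> ?snoc j ` ?L j = {}" by auto
  qed
  then show ?thesis using part by simp
qed

section \<open>Polynomial functions\<close>

inductive polyfun :: "nat set \<Rightarrow> ((nat \<Rightarrow> nat) \<Rightarrow> rat) \<Rightarrow> bool" for T where
  polyfun_const: "polyfun T (\<lambda>m. c)"
| polyfun_add: "polyfun T f \<Longrightarrow> polyfun T g \<Longrightarrow> polyfun T (\<lambda>m. f m + g m)"
| polyfun_var_mult: "polyfun T f \<Longrightarrow> i \<in> T \<Longrightarrow> polyfun T (\<lambda>m. of_nat (m i) * f m)"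

lemma polyfun_scale: "polyfun T f \<Longrightarrow> polyfun T (\<lambda>m. c * f m)"
proof (induction rule: polyfun.induct)
  case (polyfun_add f g)
  then show ?case using polyfun.polyfun_add[OF polyfun_add.IH] by (simp add: distrib_left)
next
  case (polyfun_var_mult f i)
  then show ?case using polyfun.polyfun_var_mult[OF polyfun_var_mult.IH] by (simp add: mult.left_commute)
qed (rule polyfun_const)

lemma polyfun_mult: "polyfun T f \<Longrightarrow> polyfun T g \<Longrightarrow> polyfun T (\<lambda>m. f m * g m)"
  by (induction rule: polyfun.induct)
    (auto simp: distrib_right mult.assoc intro: polyfun.intros polyfun_scale)

lemma polyfun_var: "i \<in> T \<Longrightarrow> polyfun T (\<lambda>m. of_nat (m i))"
  using polyfun_var_mult[OF polyfun_const[of T 1]] by simp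

lemma polyfun_diff: "polyfun T f \<Longrightarrow> polyfun T g \<Longrightarrow> polyfun T (\<lambda>m. f m - g m)"
  using polyfun_add[OF _ polyfun_scale[of T g "-1"]] by simp

lemma polyfun_sum: "finite A \<Longrightarrow> (\<And>a. a \<in> A \<Longrightarrow> polyfun T (f a)) \<Longrightarrow> polyfun T (\<lambda>m. \<Sum>a\<in>A. f a m)"
  by (induction A rule: finite_induct) (auto intro: polyfun.intros)

lemma polyfun_power: "polyfun T f \<Longrightarrow> polyfun T (\<lambda>m. f m ^ k)"
  by (induction k) (auto intro: polyfun_mult polyfun_const)

lemma polyfun_mono: "polyfun T f \<Longrightarrow> T \<subseteq> T' \<Longrightarrow> polyfun T' f"
  by (induction rule: polyfun.induct) (auto intro: polyfun.intros)

lemma polyfun_cong: "polyfun T f \<Longrightarrow> (\<And>i. i \<in> T \<Longrightarrow> m i = m' i) \<Longrightarrow> f m = f m'"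
  by (induction rule: polyfun.induct) auto

lemma polyfun_affine_subst:
  fixes a b :: rat
  assumes "polyfun T f"
  shows "\<exists>g. polyfun T g \<and> (\<forall>v w. of_nat w = a * of_nat (v s) + b \<longrightarrow> f (v(s := w)) = g v)"
  using assms
proof (induction rule: polyfun.induct)
  case (polyfun_const c)
  then show ?case by (auto intro: polyfun.polyfun_const)
next
  case (polyfun_add f g)
  then show ?case by (metis (no_types, lifting) polyfun.polyfun_add)
next
  case (polyfun_var_mult f i)
  then obtain g where g: "polyfun T g" "\<forall>v w. of_nat w = a * of_nat (v s) + b \<longrightarrow> f (v(s := w)) = g v"
    by blast
  show ?case
  proof (cases "i = s")
    case True
    have "polyfun T (\<lambda>v. of_nat (v s))" using True polyfun_var_mult.hyps(2) by (simp add: polyfun_var)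
    then have "polyfun T (\<lambda>v. (a * of_nat (v s) + b) * g v)"
      by (intro polyfun_mult polyfun.polyfun_add polyfun_scale polyfun.polyfun_const g(1))
    moreover have "of_nat ((v(s := w)) i) * f (v(s := w)) = (a * of_nat (v s) + b) * g v"
      if "of_nat w = a * of_nat (v s) + b" for v w
      using g(2) that True by simp
    ultimately show ?thesis by blast
  next
    case False
    have "polyfun T (\<lambda>v. of_nat (v i) * g v)" using g(1) polyfun_var_mult.hyps(2) by (rule polyfun.polyfun_var_mult)
    moreover have "of_nat ((v(s := w)) i) * f (v(s := w)) = of_nat (v i) * g v"
      if "of_nat w = a * of_nat (v s) + b" for v w
      using g(2) that False by simp
    ultimately show ?thesis by blast
  qed
qed

lemma power_eq_sum_binomial_sums:
  "(of_nat K :: rat) ^ Suc k = (\<Sum>j\<le>k. of_nat (Suc k choose j) * (\<Sum>r<K. of_nat r ^ j))"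
proof (induction K)
  case (Suc K)
  have "(of_nat K + 1 :: rat) ^ Suc k = (\<Sum>j\<le>Suc k. of_nat (Suc k choose j) * of_nat K ^ j)"
    by (subst binomial_ring) simp
  also have "\<dots> = of_nat K ^ Suc k + (\<Sum>j\<le>k. of_nat (Suc k choose j) * of_nat K ^ j)"
    by (subst sum.atMost_Suc) simp
  finally show ?case using Suc by (simp add: add.commute sum.distrib distrib_left)
qed simp

lemma polyfun_sum_powers: "s \<in> T \<Longrightarrow> \<exists>g. polyfun T g \<and> (\<forall>v. g v = (\<Sum>r<v s. (of_nat r :: rat) ^ k))"
proof (induction k rule: less_induct)
  case (less k)
  then obtain G where G: "\<And>j. j < k \<Longrightarrow> polyfun T (G j) \<and> (\<forall>v. G j v = (\<Sum>r<v s. (of_nat r :: rat) ^ j))"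
    by metis
  define g where "g v = (of_nat (v s) ^ Suc k - (\<Sum>j<k. of_nat (Suc k choose j) * G j v)) / of_nat (Suc k)"
    for v :: "nat \<Rightarrow> nat"
  have "polyfun T g" unfolding g_def divide_inverse
    by (subst mult.commute, intro polyfun_scale polyfun_diff polyfun_power polyfun_var less.prems polyfun_sum)
      (auto intro!: polyfun_scale G[THEN conjunct1])
  moreover have "g v = (\<Sum>r<v s. (of_nat r :: rat) ^ k)" for v
    using power_eq_sum_binomial_sums[of "v s" k] G
    unfolding g_def by (simp add: lessThan_Suc_atMost[symmetric] field_simps)
  ultimately show ?case by blast
qed

text \<open>Weighting by \<open>r ^ k\<close> makes the induction go through the case \<open>m s * f m\<close>.\<close>

lemma polyfun_sum_lessThan_power:
  assumes "polyfun T f" "s \<in> T"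
  shows "\<exists>g. polyfun T g \<and> (\<forall>v. g v = (\<Sum>r<v s. of_nat r ^ k * f (v(s := r))))"
  using assms(1)
proof (induction arbitrary: k rule: polyfun.induct)
  case (polyfun_const c)
  obtain g where g: "polyfun T g" "\<forall>v. g v = (\<Sum>r<v s. (of_nat r :: rat) ^ k)"
    using polyfun_sum_powers[OF assms(2)] by blast
  have "polyfun T (\<lambda>v. c * g v)" using g(1) by (rule polyfun_scale)
  then show ?case using g(2)
    by (intro exI[of _ "\<lambda>v. c * g v"]) (simp add: sum_distrib_left mult.commute)
next
  case (polyfun_add f g)
  then obtain F G where FG: "polyfun T F" "\<forall>v. F v = (\<Sum>r<v s. of_nat r ^ k * f (v(s := r)))"
    "polyfun T G" "\<forall>v. G v = (\<Sum>r<v s. of_nat r ^ k * g (v(s := r)))" by meson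
  have "polyfun T (\<lambda>v. F v + G v)" using FG(1,3) by (rule polyfun.polyfun_add)
  then show ?case using FG(2,4)
    by (intro exI[of _ "\<lambda>v. F v + G v"]) (simp add: sum.distrib distrib_left fun_upd_def)
next
  case (polyfun_var_mult f i)
  show ?case
  proof (cases "i = s")
    case True
    obtain g where g: "polyfun T g" "\<forall>v. g v = (\<Sum>r<v s. of_nat r ^ Suc k * f (v(s := r)))"
      using polyfun_var_mult.IH by blast
    have "\<forall>v. g v = (\<Sum>r<v s. of_nat r ^ k * (of_nat ((v(s := r)) i) * f (v(s := r))))"
      using g(2) True by (simp add: ac_simps fun_upd_def)
    with g(1) show ?thesis by blast
  next
    case False
    obtain g where g: "polyfun T g" "\<forall>v. g v = (\<Sum>r<v s. of_nat r ^ k * f (v(s := r)))"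
      using polyfun_var_mult.IH by blast
    have "polyfun T (\<lambda>v. of_nat (v i) * g v)"
      using g(1) polyfun_var_mult.hyps(2) by (rule polyfun.polyfun_var_mult)
    moreover have "\<forall>v. of_nat (v i) * g v = (\<Sum>r<v s. of_nat r ^ k * (of_nat ((v(s := r)) i) * f (v(s := r))))"
      using g(2) False by (simp add: sum_distrib_left ac_simps fun_upd_def)
    ultimately show ?thesis by blast
  qed
qed

lemma polyfun_sum_lessThan:
  "polyfun T f \<Longrightarrow> s \<in> T \<Longrightarrow> \<exists>g. polyfun T g \<and> (\<forall>v. g v = (\<Sum>r<v s. f (v(s := r))))"
  using polyfun_sum_lessThan_power[of T f s 0] by simp

lemma polyfun_sum_progression:
  fixes \<alpha> \<beta> :: rat
  assumes "polyfun T g" "s \<in> T"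
  shows "\<exists>G. polyfun T G \<and>
    (\<forall>v K. of_nat K = \<alpha> * of_nat (v s) + \<beta> \<longrightarrow> G v = (\<Sum>r<K. g (v(s := 2 * r + c))))"
proof -
  obtain g' where g': "polyfun T g'" "\<forall>v w. of_nat w = (2 :: rat) * of_nat (v s) + of_nat c \<longrightarrow> g (v(s := w)) = g' v"
    using polyfun_affine_subst[OF assms(1), of 2 s "of_nat c"] by auto
  have g'': "g (v(s := 2 * r + c)) = g' (v(s := r))" for v r
    using spec[OF spec[OF g'(2), of "v(s := r)"], of "2 * r + c"] by simp
  obtain F where F: "polyfun T F" "\<forall>u. F u = (\<Sum>r<u s. g' (u(s := r)))"
    using polyfun_sum_lessThan[OF g'(1) assms(2)] by blast
  obtain G where G: "polyfun T G" "\<forall>v w. of_nat w = \<alpha> * of_nat (v s) + \<beta> \<longrightarrow> F (v(s := w)) = G v"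
    using polyfun_affine_subst[OF F(1), of \<alpha> s \<beta>] by blast
  show ?thesis using G F(2) g'' by (intro exI[of _ G]) (auto simp flip: G(2))
qed

definition monomial_sum :: "nat set \<Rightarrow> ((nat \<Rightarrow> nat) \<Rightarrow> rat) \<Rightarrow> bool" where
  "monomial_sum T f \<longleftrightarrow> (\<exists>E c. finite E \<and> (\<forall>e\<in>E. \<forall>i. i \<notin> T \<longrightarrow> e i = 0) \<and>
      (\<forall>m. f m = (\<Sum>e\<in>E. c e * (\<Prod>i\<in>T. of_nat (m i) ^ e i))))"

lemma sum_restrict_coeffs:
  "finite B \<Longrightarrow> A \<subseteq> B \<Longrightarrow> (\<Sum>e\<in>B. (if e \<in> A then c e else 0) * X e) = (\<Sum>e\<in>A. c e * (X e :: rat))"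
proof -
  assume "finite B" "A \<subseteq> B"
  have "(\<Sum>e\<in>B. (if e \<in> A then c e else 0) * X e) = (\<Sum>e\<in>B. if e \<in> A then c e * X e else 0)"
    by (intro sum.cong) auto
  also have "\<dots> = (\<Sum>e\<in>B \<inter> A. c e * X e)" using \<open>finite B\<close> by (simp add: sum.inter_restrict)
  also have "B \<inter> A = A" using \<open>A \<subseteq> B\<close> by auto
  finally show ?thesis .
qed

lemma monomial_sum_polyfun: "polyfun T f \<Longrightarrow> finite T \<Longrightarrow> monomial_sum T f"
proof (induction rule: polyfun.induct)
  case (polyfun_const c)
  show ?case unfolding monomial_sum_def
    by (rule exI[of _ "{\<lambda>_. 0}"], rule exI[of _ "\<lambda>_. c"]) simp
next
  case (polyfun_add f g)
  then obtain E1 c1 E2 c2 where 1: "finite E1" "\<forall>e\<in>E1. \<forall>i. i \<notin> T \<longrightarrow> e i = 0"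
      "\<forall>m. f m = (\<Sum>e\<in>E1. c1 e * (\<Prod>i\<in>T. of_nat (m i) ^ e i))"
    and 2: "finite E2" "\<forall>e\<in>E2. \<forall>i. i \<notin> T \<longrightarrow> e i = 0"
      "\<forall>m. g m = (\<Sum>e\<in>E2. c2 e * (\<Prod>i\<in>T. of_nat (m i) ^ e i))"
    unfolding monomial_sum_def by blast
  let ?c = "\<lambda>e. (if e \<in> E1 then c1 e else 0) + (if e \<in> E2 then c2 e else 0)"
  have "f m + g m = (\<Sum>e\<in>E1 \<union> E2. ?c e * (\<Prod>i\<in>T. of_nat (m i) ^ e i))" for m
    using 1 2 sum_restrict_coeffs[of "E1 \<union> E2" E1] sum_restrict_coeffs[of "E1 \<union> E2" E2]
    by (simp add: sum.distrib distrib_right)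
  then show ?case using 1 2 unfolding monomial_sum_def
    by (intro exI[of _ "E1 \<union> E2"] exI[of _ ?c]) auto
next
  case (polyfun_var_mult f j)
  then obtain E c where 1: "finite E" "\<forall>e\<in>E. \<forall>i. i \<notin> T \<longrightarrow> e i = 0"
      "\<forall>m. f m = (\<Sum>e\<in>E. c e * (\<Prod>i\<in>T. of_nat (m i) ^ e i))"
    unfolding monomial_sum_def by blast
  define raise where "raise e = e(j := Suc (e j))" for e :: "nat \<Rightarrow> nat"
  have inj: "inj raise" unfolding raise_def inj_def
    by (metis fun_upd_apply fun_upd_triv fun_upd_upd nat.inject)
  have lower: "(raise e)(j := raise e j - Suc 0) = e" for e unfolding raise_def by simp
  have prod_raise: "(\<Prod>i\<in>T. of_nat (m i) ^ raise e i) = of_nat (m j) * (\<Prod>i\<in>T. (of_nat (m i) :: rat) ^ e i)"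
    for m e
    using polyfun_var_mult.prems polyfun_var_mult.hyps(2)
    by (simp add: raise_def prod.remove[of T j] prod.cong[of "T - {j}" _ "\<lambda>i. (of_nat (m i) :: rat) ^ (e(j := Suc (e j))) i"])
  have "(\<Sum>e\<in>raise ` E. c (e(j := e j - 1)) * (\<Prod>i\<in>T. of_nat (m i) ^ e i)) = of_nat (m j) * f m" for m
    using 1(3) inj
    by (simp add: sum.reindex inj_on_def lower prod_raise sum_distrib_left algebra_simps)
  moreover have "\<forall>e\<in>raise ` E. \<forall>i. i \<notin> T \<longrightarrow> e i = 0"
    using 1(2) polyfun_var_mult.hyps(2) unfolding raise_def by auto
  ultimately show ?case using 1(1) unfolding monomial_sum_def
    by (intro exI[of _ "raise ` E"] exI[of _ "\<lambda>e. c (e(j := e j - 1))"]) auto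
qed

lemma poly_fun_on_monomial_sum:
  assumes "finite T" "monomial_sum T f"
  shows "poly_fun_on T f"
proof -
  obtain E c where E: "finite E" "\<forall>e\<in>E. \<forall>i. i \<notin> T \<longrightarrow> e i = 0"
      "\<forall>m. f m = (\<Sum>e\<in>E. c e * (\<Prod>i\<in>T. of_nat (m i) ^ e i))"
    using assms(2) unfolding monomial_sum_def by blast
  define d where "d = (\<Sum>e\<in>E. \<Sum>i\<in>T. e i)"
  define B where "B = {e. (\<forall>i. i \<notin> T \<longrightarrow> e i = 0) \<and> (\<forall>i\<in>T. e i \<le> d)}"
  have "B \<subseteq> (\<lambda>g i. if i \<in> T then g i else 0) ` (T \<rightarrow>\<^sub>E {..d})"
  proof
    fix e assume "e \<in> B"
    then have "e = (\<lambda>i. if i \<in> T then restrict e T i else 0)" "restrict e T \<in> T \<rightarrow>\<^sub>E {..d}"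
      unfolding B_def by auto
    then show "e \<in> (\<lambda>g i. if i \<in> T then g i else 0) ` (T \<rightarrow>\<^sub>E {..d})" by blast
  qed
  then have finB: "finite B" using assms(1) by (meson finite_PiE finite_atMost finite_imageI finite_subset)
  have sub: "E \<subseteq> B"
  proof
    fix e assume e: "e \<in> E"
    have "e i \<le> d" if "i \<in> T" for i
      using that assms(1) E(1) e member_le_sum[of i T e] member_le_sum[of e E "\<lambda>e. \<Sum>i\<in>T. e i"]
      unfolding d_def by linarith
    then show "e \<in> B" using E(2) e unfolding B_def by auto
  qed
  show ?thesis unfolding poly_fun_on_def
    by (intro exI[of _ d] exI[of _ "\<lambda>e. if e \<in> E then c e else 0"])
      (use E(3) sum_restrict_coeffs[OF finB sub] in \<open>simp add: B_def\<close>)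
qed

lemma poly_fun_on_polyfun: "finite T \<Longrightarrow> polyfun T f \<Longrightarrow> poly_fun_on T f"
  using monomial_sum_polyfun poly_fun_on_monomial_sum by blast

definition poly_on :: "nat set \<Rightarrow> (nat \<Rightarrow> nat) set \<Rightarrow> ((nat \<Rightarrow> nat) \<Rightarrow> rat) \<Rightarrow> bool" where
  "poly_on T D h \<longleftrightarrow> (\<exists>g. polyfun T g \<and> (\<forall>v\<in>D. h v = g v))"

lemma poly_on_empty: "poly_on T {} h"
  unfolding poly_on_def by (blast intro: polyfun_const)

lemma poly_on_cong: "poly_on T D g \<Longrightarrow> (\<And>v. v \<in> D \<Longrightarrow> f v = g v) \<Longrightarrow> poly_on T D f"
  unfolding poly_on_def by auto

lemma poly_on_add: "poly_on T D f \<Longrightarrow> poly_on T D g \<Longrightarrow> poly_on T D (\<lambda>v. f v + g v)"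
  unfolding poly_on_def by (metis (no_types, lifting) polyfun_add)

lemma poly_on_sum:
  "finite A \<Longrightarrow> (\<And>a. a \<in> A \<Longrightarrow> poly_on T D (f a)) \<Longrightarrow> poly_on T D (\<lambda>v. \<Sum>a\<in>A. f a v)"
proof (induction A rule: finite_induct)
  case empty
  then show ?case unfolding poly_on_def by (auto intro: polyfun_const)
next
  case (insert x F)
  then show ?case using poly_on_add[of T D "f x" "\<lambda>v. \<Sum>a\<in>F. f a v"] by simp
qed

lemma poly_on_mult_constant:
  assumes "poly_on T D f" "\<And>v v'. v \<in> D \<Longrightarrow> v' \<in> D \<Longrightarrow> k v = k v'"
  shows "poly_on T D (\<lambda>v. k v * f v)"
proof (cases "D = {}")
  case False
  then obtain v0 where v0: "v0 \<in> D" by blast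
  obtain g where g: "polyfun T g" "\<forall>v\<in>D. f v = g v" using assms(1) unfolding poly_on_def by blast
  have "\<forall>v\<in>D. k v * f v = k v0 * g v" using g v0 assms(2) by metis
  then show ?thesis unfolding poly_on_def using polyfun_scale[OF g(1), of "k v0"] by blast
qed (simp add: poly_on_empty)

lemma minus_one_power_sum_parity:
  assumes "finite A" "\<And>j. j \<in> A \<Longrightarrow> odd (v j) = odd (v' j)"
  shows "(-1 :: 'a :: ring_1) ^ (\<Sum>j\<in>A. v j) = (-1) ^ (\<Sum>j\<in>A. v' j)"
proof -
  have "even (\<Sum>j\<in>A. v j) = even (\<Sum>j\<in>A. v' j)"
    using assms by (induction A rule: finite_induct) auto
  then show ?thesis by (simp add: minus_one_power_iff)
qed

lemma sum_atLeast1_atMost_odd_even: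
  "(\<Sum>t = 1..a. f t) = (\<Sum>r<a div 2. f (2 * r + 2)) + (\<Sum>r<(a + 1) div 2. f (2 * r + 1 :: nat))"
proof (induction a)
  case (Suc a)
  have "{1..Suc a} = insert (Suc a) {1..a}" by auto
  then have split: "(\<Sum>t = 1..Suc a. f t) = f (Suc a) + (\<Sum>t = 1..a. f t)" by simp
  show ?case
  proof (cases "even a")
    case True
    then have "Suc a div 2 = a div 2" "(Suc a + 1) div 2 = Suc ((a + 1) div 2)" "2 * ((a + 1) div 2) + 1 = Suc a"
      by presburger+
    then show ?thesis using Suc split by (simp add: ac_simps)
  next
    case False
    then have "Suc a div 2 = Suc (a div 2)" "(Suc a + 1) div 2 = (a + 1) div 2" "2 * (a div 2) + 2 = Suc a"
      by presburger+
    then show ?thesis using Suc split by (simp add: ac_simps)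
  qed
qed simp

lemma of_nat_half:
  "(of_nat (a div 2) :: rat) = of_nat a / 2 - (if odd a then 1 / 2 else 0)"
  "(of_nat ((a + 1) div 2) :: rat) = of_nat a / 2 + (if odd a then 1 / 2 else 0)"
  by (cases "even a"; auto elim!: evenE oddE simp: field_simps)+

lemma recurrence_unroll:
  fixes F h :: "(nat \<Rightarrow> nat) \<Rightarrow> rat"
  assumes closed: "\<And>v x. v \<in> C \<Longrightarrow> v(s := x) \<in> C"
    and rec: "\<And>v. v \<in> C \<Longrightarrow> 0 < v s \<Longrightarrow> F v = \<epsilon> * F (v(s := v s - 1)) + h v"
    and "v \<in> C"
  shows "F v = \<epsilon> ^ v s * F (v(s := 0)) + (\<Sum>t = 1..v s. \<epsilon> ^ (v s - t) * h (v(s := t)))"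
  using \<open>v \<in> C\<close>
proof (induction "v s" arbitrary: v)
  case 0
  then have "v(s := 0) = v" by (metis fun_upd_triv)
  then show ?case using 0 by simp
next
  case (Suc b)
  have IH: "F (v(s := b)) = \<epsilon> ^ b * F (v(s := 0)) + (\<Sum>t = 1..b. \<epsilon> ^ (b - t) * h (v(s := t)))"
    using Suc.hyps(1)[of "v(s := b)"] closed[OF Suc.prems] by simp
  have "F v = \<epsilon> * F (v(s := b)) + h v"
    using rec[OF Suc.prems] Suc.hyps(2) by (metis diff_Suc_1 zero_less_Suc)
  moreover have "(\<Sum>t = 1..Suc b. \<epsilon> ^ (Suc b - t) * h (v(s := t)))
      = h (v(s := Suc b)) + (\<Sum>t = 1..b. \<epsilon> ^ (Suc b - t) * h (v(s := t)))"
    by (simp add: atLeastAtMostSuc_conv)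
  moreover have "(\<Sum>t = 1..b. \<epsilon> ^ (Suc b - t) * h (v(s := t))) = \<epsilon> * (\<Sum>t = 1..b. \<epsilon> ^ (b - t) * h (v(s := t)))"
    unfolding sum_distrib_left by (intro sum.cong refl) (simp add: Suc_diff_le mult.assoc)
  moreover have "v(s := Suc b) = v" using Suc.hyps(2) by (metis fun_upd_triv)
  ultimately show ?case unfolding IH Suc.hyps(2)[symmetric] by (simp add: algebra_simps)
qed

lemma recurrence_unroll_even_odd:
  fixes F h :: "(nat \<Rightarrow> nat) \<Rightarrow> rat"
  assumes closed: "\<And>v x. v \<in> C \<Longrightarrow> v(s := x) \<in> C"
    and eps: "\<epsilon> = 1 \<or> \<epsilon> = -1"
    and rec: "\<And>v. v \<in> C \<Longrightarrow> 0 < v s \<Longrightarrow> F v = \<epsilon> * F (v(s := v s - 1)) + h v"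
    and v: "v \<in> C"
  shows "F v = \<epsilon> ^ v s * F (v(s := 0))
    + (if odd (v s) then \<epsilon> else 1) * (\<Sum>r<v s div 2. h (v(s := 2 * r + 2)))
    + (if odd (v s) then 1 else \<epsilon>) * (\<Sum>r<(v s + 1) div 2. h (v(s := 2 * r + 1)))"
proof -
  have eps_pow: "\<epsilon> ^ k = (if even k then 1 else \<epsilon>)" for k using eps by (auto simp: minus_one_power_iff)
  have "F v = \<epsilon> ^ v s * F (v(s := 0)) + (\<Sum>t = 1..v s. \<epsilon> ^ (v s - t) * h (v(s := t)))"
    by (rule recurrence_unroll[of C s F \<epsilon> h, OF closed rec v])
  also have "(\<Sum>t = 1..v s. \<epsilon> ^ (v s - t) * h (v(s := t)))
      = (\<Sum>r<v s div 2. (if odd (v s) then \<epsilon> else 1) * h (v(s := 2 * r + 2)))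
      + (\<Sum>r<(v s + 1) div 2. (if odd (v s) then 1 else \<epsilon>) * h (v(s := 2 * r + 1)))"
    unfolding sum_atLeast1_atMost_odd_even using eps_pow
    by (intro arg_cong2[where f = "(+)"] sum.cong) auto
  finally show ?thesis by (simp only: sum_distrib_left add.assoc)
qed

text \<open>Once the parity of \<open>v s\<close> is fixed, the sums in the unrolled recurrence run over ranges whose
  lengths are affine in \<open>v s\<close>, so Faulhaber's formula makes them polynomial.\<close>

lemma poly_on_parity_of_recurrence:
  fixes F h :: "(nat \<Rightarrow> nat) \<Rightarrow> rat"
  assumes sT: "s \<in> T"
    and closed: "\<And>v x. v \<in> C \<Longrightarrow> v(s := x) \<in> C"
    and eps: "\<epsilon> = 1 \<or> \<epsilon> = -1"
    and rec: "\<And>v. v \<in> C \<Longrightarrow> 0 < v s \<Longrightarrow> F v = \<epsilon> * F (v(s := v s - 1)) + h v"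
    and h: "\<And>q. poly_on T {v\<in>C. odd (v s) = q} h"
    and base: "poly_on T C (\<lambda>v. F (v(s := 0)))"
  shows "poly_on T {v\<in>C. odd (v s) = q} F"
proof -
  obtain g0 where g0: "polyfun T g0" "\<forall>v\<in>C. F (v(s := 0)) = g0 v" using base unfolding poly_on_def by blast
  obtain he where he: "polyfun T he" "\<forall>v\<in>C. even (v s) \<longrightarrow> h v = he v"
    using h[of False] unfolding poly_on_def by auto
  obtain ho where ho: "polyfun T ho" "\<forall>v\<in>C. odd (v s) \<longrightarrow> h v = ho v"
    using h[of True] unfolding poly_on_def by auto
  define \<beta> :: rat where "\<beta> = (if q then 1 / 2 else 0)"
  obtain He where He: "polyfun T He"
      "\<forall>v K. of_nat K = 1 / 2 * of_nat (v s) + - \<beta> \<longrightarrow> He v = (\<Sum>r<K. he (v(s := 2 * r + 2)))"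
    using polyfun_sum_progression[OF he(1) sT] by blast
  obtain Ho where Ho: "polyfun T Ho"
      "\<forall>v K. of_nat K = 1 / 2 * of_nat (v s) + \<beta> \<longrightarrow> Ho v = (\<Sum>r<K. ho (v(s := 2 * r + 1)))"
    using polyfun_sum_progression[OF ho(1) sT] by blast
  define ce :: rat where "ce = (if q then \<epsilon> else 1)"
  define co :: rat where "co = (if q then 1 else \<epsilon>)"
  have "F v = ce * g0 v + ce * He v + co * Ho v" if v: "v \<in> C" "odd (v s) = q" for v
  proof -
    have "(\<Sum>r<v s div 2. h (v(s := 2 * r + 2))) = He v"
      using He(2) of_nat_half(1)[of "v s"] v he(2) closed[OF v(1)] unfolding \<beta>_def by simp
    moreover have "(\<Sum>r<(v s + 1) div 2. h (v(s := 2 * r + 1))) = Ho v"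
      using Ho(2) of_nat_half(2)[of "v s"] v ho(2) closed[OF v(1)] unfolding \<beta>_def by simp
    moreover have "\<epsilon> ^ v s = ce" using eps v(2) unfolding ce_def by (auto simp: minus_one_power_iff)
    ultimately show ?thesis
      using recurrence_unroll_even_odd[of C s \<epsilon> F h, OF closed eps rec v(1)] g0(2) v
      unfolding ce_def co_def by simp
  qed
  moreover have "polyfun T (\<lambda>v. ce * g0 v + ce * He v + co * Ho v)"
    by (intro polyfun_add polyfun_scale g0(1) He(1) Ho(1))
  ultimately show ?thesis unfolding poly_on_def by blast
qed

lemma poly_on_mono: "poly_on T D f \<Longrightarrow> T \<subseteq> T' \<Longrightarrow> poly_on T' D f"
  unfolding poly_on_def using polyfun_mono by blast

lemma poly_on_compose:
  assumes "poly_on T D' F" "\<And>v. v \<in> D \<Longrightarrow> \<phi> v \<in> D'" "\<And>v i. v \<in> D \<Longrightarrow> i \<in> T \<Longrightarrow> \<phi> v i = v i"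
  shows "poly_on T D (\<lambda>v. F (\<phi> v))"
proof -
  obtain g where g: "polyfun T g" "\<forall>v\<in>D'. F v = g v" using assms(1) unfolding poly_on_def by blast
  have "F (\<phi> v) = g v" if "v \<in> D" for v
    using g(2) assms(2,3)[OF that] polyfun_cong[OF g(1), of "\<phi> v" v] by simp
  then show ?thesis unfolding poly_on_def using g(1) by blast
qed

section \<open>Induction over a chain\<close>

definition fiber :: "nat set \<Rightarrow> (nat \<Rightarrow> nat) \<Rightarrow> (nat \<Rightarrow> bool) \<Rightarrow> (nat \<Rightarrow> nat) set" where
  "fiber T w p = {v. (\<forall>i. i \<notin> T \<longrightarrow> v i = w i) \<and> (\<forall>i\<in>T. odd (v i) = p i)}"

lemma parity_eq_on_fiber: "v \<in> fiber T w p \<Longrightarrow> v' \<in> fiber T w p \<Longrightarrow> odd (v j) = odd (v' j)"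
  unfolding fiber_def by (cases "j \<in> T") auto

definition outside_mass :: "nat \<Rightarrow> nat set \<Rightarrow> (nat \<Rightarrow> nat) \<Rightarrow> nat" where
  "outside_mass n T w = (\<Sum>i\<in>{0..<n} - T. w i)"

lemma outside_mass_decrement:
  assumes "i < n" "i \<notin> T" "0 < w i"
  shows "outside_mass n T (w(i := w i - 1)) < outside_mass n T w"
proof -
  have i: "i \<in> {0..<n} - T" using assms by auto
  have "outside_mass n T (w(i := w i - 1)) = w i - 1 + (\<Sum>j\<in>{0..<n} - T - {i}. w j)"
    unfolding outside_mass_def using sum.remove[OF _ i, of "w(i := w i - 1)"] by simp
  also have "\<dots> < outside_mass n T w"
    unfolding outside_mass_def using sum.remove[OF _ i, of w] assms(3) by simp
  finally show ?thesis .
qed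

lemma outside_mass_remove:
  assumes "s \<in> T" "s < n"
  shows "outside_mass n (T - {s}) (w(s := 0)) = outside_mass n T w"
proof -
  have "{0..<n} - (T - {s}) = insert s ({0..<n} - T)" "s \<notin> {0..<n} - T" using assms by auto
  moreover have "(\<Sum>i\<in>{0..<n} - T. (w(s := 0)) i) = (\<Sum>i\<in>{0..<n} - T. w i)"
    using assms(1) by (intro sum.cong) auto
  ultimately show ?thesis unfolding outside_mass_def by simp
qed

locale poset_chain =
  fixes le :: "nat \<Rightarrow> nat \<Rightarrow> bool" and n :: nat and S :: "nat set"
  assumes refl: "\<forall>i<n. le i i"
      and antisym: "\<forall>i<n. \<forall>j<n. le i j \<and> le j i \<longrightarrow> i = j"
      and trans: "\<forall>i<n. \<forall>j<n. \<forall>k<n. le i j \<and> le j k \<longrightarrow> le i k"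
      and S_sub: "S \<subseteq> {0..<n}"
      and S_chain: "\<forall>i\<in>S. \<forall>j\<in>S. le i j \<or> le j i"
begin

abbreviation L_rat :: "(nat \<Rightarrow> nat) \<Rightarrow> rat" where
  "L_rat m \<equiv> of_int (L_minus le n m)"

lemma L_rat_recursion:
  "\<exists>i<n. 0 < m i \<Longrightarrow> L_rat m = (\<Sum>i\<in>maximal_chains le n m.
     (-1) ^ (\<Sum>j\<in>{i<..<n}. m j) * L_rat (m(i := m i - 1)))"
  by (simp add: L_minus_recursion of_int_sum)

lemma finite_S: "finite S"
  using S_sub finite_subset by blast

lemma less_n_of_subset: "T \<subseteq> S \<Longrightarrow> i \<in> T \<Longrightarrow> i < n"
  using S_sub by auto

lemma le_trans_on: "le i j \<Longrightarrow> le j k \<Longrightarrow> i < n \<Longrightarrow> j < n \<Longrightarrow> k < n \<Longrightarrow> le i k"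
  using trans by blast

lemma greatest_in_chain: "T \<subseteq> S \<Longrightarrow> T \<noteq> {} \<Longrightarrow> \<exists>s\<in>T. \<forall>t\<in>T. le t s"
proof (induction T rule: infinite_finite_induct)
  case (infinite T)
  then show ?case using finite_S finite_subset by blast
next
  case (insert x F)
  then have x: "x \<in> S" "x < n" using S_sub by auto
  show ?case
  proof (cases "F = {}")
    case True
    then show ?thesis using refl x by auto
  next
    case False
    then obtain s where s: "s \<in> F" "\<forall>t\<in>F. le t s" using insert by auto
    then have "s \<in> S" "s < n" "F \<subseteq> {0..<n}" using insert.prems S_sub by auto
    then consider "le s x" | "le x s" using S_chain x by blast
    then show ?thesis
    proof cases
      case 1
      then have "\<forall>t\<in>F. le t x" using s trans x \<open>s < n\<close> \<open>F \<subseteq> {0..<n}\<close> by (meson atLeastLessThan_iff subsetD)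
      then show ?thesis using refl x by auto
    qed (use s in auto)
  qed
qed simp

text \<open>Here \<open>s\<close> is the greatest element of \<open>T\<close> and \<open>w\<close> gives the chain lengths outside \<open>T\<close>.\<close>

definition outer_maxima :: "nat set \<Rightarrow> nat \<Rightarrow> (nat \<Rightarrow> nat) \<Rightarrow> nat set" where
  "outer_maxima T s w = {i. i < n \<and> i \<notin> T \<and> 0 < w i \<and>
     (\<forall>j<n. j \<notin> T \<and> j \<noteq> i \<and> 0 < w j \<longrightarrow> \<not> le i j) \<and> \<not> le i s}"

definition blocked :: "nat set \<Rightarrow> nat \<Rightarrow> (nat \<Rightarrow> nat) \<Rightarrow> bool" where
  "blocked T s w \<longleftrightarrow> (\<exists>j<n. j \<notin> T \<and> 0 < w j \<and> le s j)"

context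
  fixes T :: "nat set" and s :: nat and v w :: "nat \<Rightarrow> nat"
  assumes T: "T \<subseteq> S" "s \<in> T" "\<forall>t\<in>T. le t s"
    and v: "\<And>i. i \<notin> T \<Longrightarrow> v i = w i"
begin

lemma outer_maxima_subset_maximal_chains: "outer_maxima T s w \<subseteq> maximal_chains le n v"
  unfolding outer_maxima_def maximal_chains_def
  using v T(3) less_n_of_subset[OF T(1)] less_n_of_subset[OF T(1,2)] le_trans_on
  by (smt (verit) mem_Collect_eq subsetI)

lemma greatest_in_maximal_chains:
  assumes "\<not> blocked T s w" "0 < v s"
  shows "s \<in> maximal_chains le n v"
proof -
  have "\<not> le s j" if j: "j < n" "j \<noteq> s" "0 < v j" for j
  proof (cases "j \<in> T")
    case True
    then show ?thesis using antisym T(3) j less_n_of_subset[OF T(1,2)] by blast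
  next
    case False
    then show ?thesis using assms(1) v[OF False] j unfolding blocked_def by auto
  qed
  then show ?thesis using less_n_of_subset[OF T(1,2)] assms(2) unfolding maximal_chains_def by auto
qed

lemma maximal_chains_inside:
  assumes "i \<in> maximal_chains le n v" "i \<in> T" "blocked T s w \<or> 0 < v s"
  shows "i = s \<and> \<not> blocked T s w"
proof -
  have i: "i < n" "\<forall>j<n. j \<noteq> i \<and> 0 < v j \<longrightarrow> \<not> le i j"
    using assms(1) unfolding maximal_chains_def by auto
  have "\<not> blocked T s w"
    using i assms(2) T(3) less_n_of_subset[OF T(1)] less_n_of_subset[OF T(1,2)] v le_trans_on
    unfolding blocked_def by (metis (no_types, lifting))
  then show ?thesis using assms(2,3) i(2) T(3) less_n_of_subset[OF T(1,2)] by auto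
qed

lemma maximal_chains_outside:
  assumes "i \<in> maximal_chains le n v" "i \<notin> T" "blocked T s w \<or> 0 < v s"
  shows "i \<in> outer_maxima T s w"
proof -
  have i: "i < n" "0 < w i" "\<forall>j<n. j \<noteq> i \<and> 0 < v j \<longrightarrow> \<not> le i j"
    using assms(1,2) v unfolding maximal_chains_def by auto
  have "\<not> le i s"
  proof
    assume "le i s"
    show False
    proof (cases "blocked T s w")
      case True
      then obtain j where j: "j < n" "j \<notin> T" "0 < w j" "le s j" unfolding blocked_def by blast
      then have "j = i" using i(3) v le_trans_on[OF \<open>le i s\<close> j(4) i(1) less_n_of_subset[OF T(1,2)] j(1)] by auto
      then show False using antisym \<open>le i s\<close> j(4) i(1) less_n_of_subset[OF T(1,2)] T(2) assms(2) by blast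
    next
      case False
      then show False using assms(2,3) i(3) \<open>le i s\<close> less_n_of_subset[OF T(1,2)] T(2) by auto
    qed
  qed
  then show ?thesis using i assms(2) v unfolding outer_maxima_def by auto
qed

lemma maximal_chains_fiber:
  assumes "blocked T s w \<or> 0 < v s"
  shows "maximal_chains le n v =
    (if blocked T s w then outer_maxima T s w else insert s (outer_maxima T s w))"
  using outer_maxima_subset_maximal_chains greatest_in_maximal_chains
    maximal_chains_inside[OF _ _ assms] maximal_chains_outside[OF _ _ assms] assms by auto

end

definition outer_terms :: "nat set \<Rightarrow> nat \<Rightarrow> (nat \<Rightarrow> nat) \<Rightarrow> (nat \<Rightarrow> nat) \<Rightarrow> rat" where
  "outer_terms T s w v =
     (\<Sum>i\<in>outer_maxima T s w. (-1) ^ (\<Sum>j\<in>{i<..<n}. v j) * L_rat (v(i := v i - 1)))"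

lemma finite_outer_maxima: "finite (outer_maxima T s w)"
  unfolding outer_maxima_def by simp

lemma poly_on_outer_terms:
  assumes IH: "\<And>w'. outside_mass n T w' < outside_mass n T w \<Longrightarrow> poly_on T (fiber T w' p) L_rat"
  shows "poly_on T (fiber T w p) (outer_terms T s w)"
  unfolding outer_terms_def
proof (intro poly_on_sum finite_outer_maxima poly_on_mult_constant)
  fix i assume "i \<in> outer_maxima T s w"
  then have i: "i < n" "i \<notin> T" "0 < w i" unfolding outer_maxima_def by auto
  show "poly_on T (fiber T w p) (\<lambda>v. L_rat (v(i := v i - 1)))"
  proof (rule poly_on_compose[OF IH[OF outside_mass_decrement[of i n T w, OF i]]])
    show "v(i := v i - 1) \<in> fiber T (w(i := w i - 1)) p" if "v \<in> fiber T w p" for v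
      using that i(2) unfolding fiber_def by auto
  qed (use i(2) in auto)
  show "(-1 :: rat) ^ (\<Sum>j\<in>{i<..<n}. v j) = (-1) ^ (\<Sum>j\<in>{i<..<n}. v' j)"
    if "v \<in> fiber T w p" "v' \<in> fiber T w p" for v v'
    using parity_eq_on_fiber[OF that] by (intro minus_one_power_sum_parity) auto
qed

lemma poly_on_fiber_blocked:
  assumes T: "T \<subseteq> S" "s \<in> T" "\<forall>t\<in>T. le t s" and "blocked T s w"
    and outer: "poly_on T (fiber T w p) (outer_terms T s w)"
  shows "poly_on T (fiber T w p) L_rat"
proof (rule poly_on_cong[OF outer])
  fix v assume v: "v \<in> fiber T w p"
  then have vw: "\<And>i. i \<notin> T \<Longrightarrow> v i = w i" unfolding fiber_def by auto
  have "\<exists>i<n. 0 < v i" using \<open>blocked T s w\<close> vw unfolding blocked_def by force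
  then show "L_rat v = outer_terms T s w v"
    unfolding L_rat_recursion[OF \<open>\<exists>i<n. 0 < v i\<close>] outer_terms_def
    using maximal_chains_fiber[of T s v w, OF T vw] \<open>blocked T s w\<close> by simp
qed

lemma L_rat_recurrence_unblocked:
  assumes T: "T \<subseteq> S" "s \<in> T" "\<forall>t\<in>T. le t s" and "\<not> blocked T s w"
    and vw: "\<And>i. i \<notin> T \<Longrightarrow> v i = w i" and "0 < v s"
  shows "L_rat v = (-1) ^ (\<Sum>j\<in>{s<..<n}. v j) * L_rat (v(s := v s - 1)) + outer_terms T s w v"
proof -
  have "\<exists>i<n. 0 < v i" using \<open>0 < v s\<close> less_n_of_subset[OF T(1,2)] by blast
  moreover have "maximal_chains le n v = insert s (outer_maxima T s w)"
    using maximal_chains_fiber[of T s v w, OF T vw] \<open>0 < v s\<close> \<open>\<not> blocked T s w\<close> by simp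
  moreover have "s \<notin> outer_maxima T s w" using T(2) unfolding outer_maxima_def by auto
  ultimately show ?thesis
    unfolding L_rat_recursion[OF \<open>\<exists>i<n. 0 < v i\<close>] outer_terms_def by (simp add: finite_outer_maxima)
qed

text \<open>Here only the parity of \<open>v s\<close> varies, so the sign in the recurrence is a constant \<open>\<epsilon>\<close>.\<close>

lemma poly_on_fiber_unblocked:
  assumes T: "T \<subseteq> S" "s \<in> T" "\<forall>t\<in>T. le t s" and "\<not> blocked T s w"
    and outer: "\<And>q. poly_on T (fiber T w (p(s := q))) (outer_terms T s w)"
    and base: "poly_on (T - {s}) (fiber (T - {s}) (w(s := 0)) p) L_rat"
  shows "poly_on T (fiber T w p) L_rat"
proof -
  define C where "C = {v. (\<forall>i. i \<notin> T \<longrightarrow> v i = w i) \<and> (\<forall>i\<in>T - {s}. odd (v i) = p i)}"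
  have C_fiber: "{v\<in>C. odd (v s) = q} = fiber T w (p(s := q))" for q
    unfolding C_def fiber_def using T(2) by auto
  have "poly_on T {v\<in>C. odd (v s) = p s} L_rat"
  proof (cases "C = {}")
    case False
    then obtain v0 where v0: "v0 \<in> C" by blast
    define \<epsilon> :: rat where "\<epsilon> = (-1) ^ (\<Sum>j\<in>{s<..<n}. v0 j)"
    have closed: "v(s := x) \<in> C" if "v \<in> C" for v x using that T(2) unfolding C_def by auto
    have "(-1 :: rat) ^ (\<Sum>j\<in>{s<..<n}. v j) = \<epsilon>" if "v \<in> C" for v
    proof -
      have "odd (v j) = odd (v0 j)" if "j \<noteq> s" for j
        using \<open>v \<in> C\<close> v0 that unfolding C_def by (cases "j \<in> T") auto
      then show ?thesis unfolding \<epsilon>_def by (intro minus_one_power_sum_parity) auto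
    qed
    then have rec: "L_rat v = \<epsilon> * L_rat (v(s := v s - 1)) + outer_terms T s w v"
      if "v \<in> C" "0 < v s" for v
      using L_rat_recurrence_unblocked[OF T \<open>\<not> blocked T s w\<close>, of v] that unfolding C_def by auto
    have "poly_on (T - {s}) C (\<lambda>v. L_rat (v(s := 0)))"
      by (rule poly_on_compose[OF base]) (auto simp: C_def fiber_def)
    then have "poly_on T C (\<lambda>v. L_rat (v(s := 0)))" by (rule poly_on_mono) auto
    moreover have "\<epsilon> = 1 \<or> \<epsilon> = -1" unfolding \<epsilon>_def by (simp add: minus_one_power_iff)
    ultimately show ?thesis
      using poly_on_parity_of_recurrence[of s T C \<epsilon> L_rat "outer_terms T s w", OF T(2) closed _ rec]
        outer unfolding C_fiber by blast
  qed (simp add: poly_on_empty)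
  then show ?thesis using C_fiber[of "p s"] by simp
qed

text \<open>Removing \<open>s\<close> from \<open>T\<close> (and setting \<open>v s = 0\<close>) keeps the outside mass, while the outer
  terms lower it; hence the induction on their sum.\<close>

theorem L_minus_poly_on_fiber: "T \<subseteq> S \<Longrightarrow> poly_on T (fiber T w p) L_rat"
proof (induction "outside_mass n T w + card T" arbitrary: T w p rule: less_induct)
  case less
  show ?case
  proof (cases "T = {}")
    case True
    then have "fiber T w p = {w}" unfolding fiber_def by auto
    then show ?thesis unfolding poly_on_def by (auto intro: polyfun_const)
  next
    case False
    then obtain s where s: "s \<in> T" "\<forall>t\<in>T. le t s" using greatest_in_chain less.prems by blast
    have fin: "finite T" using less.prems finite_S finite_subset by blast
    have outer: "poly_on T (fiber T w p') (outer_terms T s w)" for p'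
      by (rule poly_on_outer_terms) (use less.hyps less.prems in simp)
    show ?thesis
    proof (cases "blocked T s w")
      case True
      then show ?thesis using poly_on_fiber_blocked less.prems s outer by blast
    next
      case False
      have "s < n" using less.prems s(1) S_sub by auto
      then have "poly_on (T - {s}) (fiber (T - {s}) (w(s := 0)) p) L_rat"
        using less.hyps[of "T - {s}" "w(s := 0)"] less.prems outside_mass_remove[OF s(1)]
          card_Diff1_less[OF fin s(1)] by auto
      then show ?thesis using poly_on_fiber_unblocked less.prems s outer False by blast
    qed
  qed
qed

end

theorem corollary5p3:
  fixes le :: "nat \<Rightarrow> nat \<Rightarrow> bool" and n :: nat and S :: "nat set" and m0 :: "nat \<Rightarrow> nat"
  assumes refl: "\<forall>i<n. le i i"
      and antisym: "\<forall>i<n. \<forall>j<n. le i j \<and> le j i \<longrightarrow> i = j"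
      and trans: "\<forall>i<n. \<forall>j<n. \<forall>k<n. le i j \<and> le j k \<longrightarrow> le i k"
      and S_sub: "S \<subseteq> {0..<n}"
      and S_chain: "\<forall>i\<in>S. \<forall>j\<in>S. le i j \<or> le j i"
  shows "\<exists>Q :: (nat \<Rightarrow> bool) \<Rightarrow> (nat \<Rightarrow> nat) \<Rightarrow> rat.
           (\<forall>p. poly_fun_on S (Q p)) \<and>
           (\<forall>m. (\<forall>i<n. i \<notin> S \<longrightarrow> m i = m0 i) \<longrightarrow>
                of_int (L_minus le n m) = Q (\<lambda>i. if i \<in> S then odd (m i) else False) m)"
proof -
  interpret poset_chain le n S
    using assms by unfold_locales
  have "\<forall>p. \<exists>g. polyfun S g \<and> (\<forall>v\<in>fiber S m0 p. L_rat v = g v)"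
    using L_minus_poly_on_fiber[of S m0] unfolding poly_on_def by blast
  then obtain Q where Q: "\<And>p. polyfun S (Q p)" "\<And>p v. v \<in> fiber S m0 p \<Longrightarrow> L_rat v = Q p v"
    by metis
  have "L_rat m = Q (\<lambda>i. if i \<in> S then odd (m i) else False) m"
    if m: "\<forall>i<n. i \<notin> S \<longrightarrow> m i = m0 i" for m
  proof -
    define v where "v i = (if i \<in> S then m i else m0 i)" for i
    have "L_minus le n m = L_minus le n v" by (rule L_minus_cong) (use m in \<open>simp add: v_def\<close>)
    moreover have "v \<in> fiber S m0 (\<lambda>i. if i \<in> S then odd (m i) else False)"
      unfolding fiber_def v_def by simp
    moreover have "Q p v = Q p m" for p by (rule polyfun_cong[OF Q(1)]) (simp add: v_def)
    ultimately show ?thesis using Q(2) by metis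
  qed
  then show ?thesis using Q(1) poly_fun_on_polyfun[OF finite_S] by blast
qed

end
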